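(* Let $m,n,w$ be positive integers with $w\le m$, and let $d=(n-1)w+r$ with $0<r\le w$. Then $A(m,n,w,d)\le B(m,w,r)$.
   Context: $J(m,w)$ denotes the set of binary vectors of length $m$ and Hamming weight $w$. Elements of $J(m,w)^n$ are identified with $m\times n$ binary matrices all of whose columns have weight $w$, with binary Hamming distance. $A(m,n,w,d)$ is the maximum cardinality of a nonempty subset of $J(m,w)^n$ with pairwise Hamming distances at least $2d$. $B(m,w,r)$ is the maximum cardinality of a nonempty subset of $J(m,w)$ with pairwise Hamming distances at least $2r$. *)

theory Defs
  imports Main
begin

definition weight :: "bool list \<Rightarrow> nat" where
  "weight v = length (filter id v)"

definition hamming :: "bool list \<Rightarrow> bool list \<Rightarrow> nat" where
  "hamming u v = card {i. i < length u \<and> u ! i \<noteq> v ! i}"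

definition J :: "nat \<Rightarrow> nat \<Rightarrow> bool list set" where
  "J m w = {v. length v = m \<and> weight v = w}"

text \<open>J(m,w)^n: m x n binary matrices given as the list of their n columns,
  each column of weight w.\<close>
definition Jpow :: "nat \<Rightarrow> nat \<Rightarrow> nat \<Rightarrow> bool list list set" where
  "Jpow m n w = {M. length M = n \<and> (\<forall>c\<in>set M. c \<in> J m w)}"

definition mdist :: "bool list list \<Rightarrow> bool list list \<Rightarrow> nat" where
  "mdist M N = (\<Sum>j<length M. hamming (M ! j) (N ! j))"

definition A :: "nat \<Rightarrow> nat \<Rightarrow> nat \<Rightarrow> nat \<Rightarrow> nat" where
  "A m n w d = Max {card C | C. C \<subseteq> Jpow m n w \<and> C \<noteq> {} \<and>
      (\<forall>x\<in>C. \<forall>y\<in>C. x \<noteq> y \<longrightarrow> 2 * d \<le> mdist x y)}"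

definition B :: "nat \<Rightarrow> nat \<Rightarrow> nat \<Rightarrow> nat" where
  "B m w r = Max {card C | C. C \<subseteq> J m w \<and> C \<noteq> {} \<and>
      (\<forall>x\<in>C. \<forall>y\<in>C. x \<noteq> y \<longrightarrow> 2 * r \<le> hamming x y)}"

end

theory Submission
  imports Defs
begin

text \<open>Two distinct columns of weight \<open>w\<close> differ in at most \<open>2 w\<close> positions, so the
  last \<open>n - 1\<close> columns of two codewords contribute at most \<open>2 (n - 1) w\<close> to their
  distance.  At distance at least \<open>2 ((n - 1) w + r)\<close> the first columns must therefore
  be at distance at least \<open>2 r > 0\<close>; so deleting all but the first column maps a code
  injectively onto a constant weight code of minimum distance \<open>2 r\<close>.\<close>

lemma card_true_positions_eq_weight: "card {i. i < length u \<and> u ! i} = weight u"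
  unfolding weight_def by (simp add: length_filter_conv_card)

lemma hamming_le_weight_add:
  assumes "length u \<le> length v"
  shows "hamming u v \<le> weight u + weight v"
proof -
  have "{i. i < length u \<and> u ! i \<noteq> v ! i} \<subseteq>
        {i. i < length u \<and> u ! i} \<union> {i. i < length v \<and> v ! i}"
    using assms by auto
  hence "hamming u v \<le> card ({i. i < length u \<and> u ! i} \<union> {i. i < length v \<and> v ! i})"
    unfolding hamming_def by (intro card_mono) auto
  also have "\<dots> \<le> card {i. i < length u \<and> u ! i} + card {i. i < length v \<and> v ! i}"
    by (rule card_Un_le)
  finally show ?thesis by (simp add: card_true_positions_eq_weight)
qed

lemma hamming_J_le:
  assumes "u \<in> J m w" "v \<in> J m w"
  shows "hamming u v \<le> 2 * w"
  using assms hamming_le_weight_add[of u v] by (simp add: J_def)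

lemma hamming_self: "hamming u u = 0"
  by (simp add: hamming_def)

lemma finite_J: "finite (J m w)"
proof (rule finite_subset)
  show "J m w \<subseteq> {xs. set xs \<subseteq> UNIV \<and> length xs = m}" by (auto simp: J_def)
  show "finite {xs :: bool list. set xs \<subseteq> UNIV \<and> length xs = m}"
    by (rule finite_lists_length_eq) simp
qed

lemma replicate_in_J: "w \<le> m \<Longrightarrow> replicate w True @ replicate (m - w) False \<in> J m w"
  by (simp add: J_def weight_def)

lemma mdist_le_first_column:
  assumes "x \<in> Jpow m n w" "y \<in> Jpow m n w" "0 < n"
  shows "mdist x y \<le> hamming (x ! 0) (y ! 0) + (n - 1) * (2 * w)"
proof -
  have len: "length x = n" "length y = n" using assms by (auto simp: Jpow_def)
  have "mdist x y = hamming (x ! 0) (y ! 0) + (\<Sum>j\<in>{..<n} - {0}. hamming (x ! j) (y ! j))"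
    unfolding mdist_def len using assms(3) by (subst sum.remove[of _ 0]) auto
  also have "(\<Sum>j\<in>{..<n} - {0}. hamming (x ! j) (y ! j)) \<le> (\<Sum>j\<in>{..<n} - {0}. 2 * w)"
    using assms len by (intro sum_mono hamming_J_le) (auto simp: Jpow_def)
  also have "(\<Sum>j\<in>{..<n} - {0}. 2 * w) = (n - 1) * (2 * w)"
    using assms(3) by simp
  finally show ?thesis by simp
qed

lemma card_le_B:
  assumes "C \<subseteq> J m w" "C \<noteq> {}"
    and "\<forall>x\<in>C. \<forall>y\<in>C. x \<noteq> y \<longrightarrow> 2 * r \<le> hamming x y"
  shows "card C \<le> B m w r"
proof -
  have "{card C | C. C \<subseteq> J m w \<and> C \<noteq> {} \<and>
      (\<forall>x\<in>C. \<forall>y\<in>C. x \<noteq> y \<longrightarrow> 2 * r \<le> hamming x y)} \<subseteq> {..card (J m w)}"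
    using finite_J by (auto intro: card_mono)
  then show ?thesis
    unfolding B_def using assms by (intro Max_ge) (auto dest: finite_subset)
qed

lemma A_le:
  assumes "w \<le> m"
    and bound: "\<And>C. C \<subseteq> Jpow m n w \<Longrightarrow> C \<noteq> {} \<Longrightarrow>
      \<forall>x\<in>C. \<forall>y\<in>C. x \<noteq> y \<longrightarrow> 2 * d \<le> mdist x y \<Longrightarrow> card C \<le> k"
  shows "A m n w d \<le> k"
proof -
  let ?S = "{card C | C. C \<subseteq> Jpow m n w \<and> C \<noteq> {} \<and>
      (\<forall>x\<in>C. \<forall>y\<in>C. x \<noteq> y \<longrightarrow> 2 * d \<le> mdist x y)}"
  have "{replicate n (replicate w True @ replicate (m - w) False)} \<subseteq> Jpow m n w"
    using replicate_in_J[OF assms(1)] by (auto simp: Jpow_def)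
  then have "?S \<noteq> {}" by blast
  moreover have "?S \<subseteq> {..k}" using bound by auto
  ultimately show ?thesis
    unfolding A_def using bound by (intro Max.boundedI) (auto dest: finite_subset)
qed

lemma first_column_code:
  assumes C: "C \<subseteq> Jpow m n w"
    and dist: "\<forall>x\<in>C. \<forall>y\<in>C. x \<noteq> y \<longrightarrow> 2 * ((n - 1) * w + r) \<le> mdist x y"
    and "0 < n" "0 < r"
  shows "inj_on (\<lambda>x. x ! 0) C"
    and "(\<lambda>x. x ! 0) ` C \<subseteq> J m w"
    and "\<forall>u\<in>(\<lambda>x. x ! 0) ` C. \<forall>v\<in>(\<lambda>x. x ! 0) ` C. u \<noteq> v \<longrightarrow> 2 * r \<le> hamming u v"
proof -
  have far: "2 * r \<le> hamming (x ! 0) (y ! 0)" if "x \<in> C" "y \<in> C" "x \<noteq> y" for x y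
  proof -
    have "2 * ((n - 1) * w + r) \<le> hamming (x ! 0) (y ! 0) + (n - 1) * (2 * w)"
      using dist that mdist_le_first_column[of x m n w y] C \<open>0 < n\<close> by (meson le_trans subsetD)
    then show ?thesis by (simp add: algebra_simps)
  qed
  show "inj_on (\<lambda>x. x ! 0) C"
  proof (rule inj_onI, rule ccontr)
    fix x y assume "x \<in> C" "y \<in> C" "x ! 0 = y ! 0" "x \<noteq> y"
    with far[of x y] \<open>0 < r\<close> show False by (simp add: hamming_self)
  qed
  show "(\<lambda>x. x ! 0) ` C \<subseteq> J m w"
    using C \<open>0 < n\<close> by (force simp: Jpow_def)
  show "\<forall>u\<in>(\<lambda>x. x ! 0) ` C. \<forall>v\<in>(\<lambda>x. x ! 0) ` C. u \<noteq> v \<longrightarrow> 2 * r \<le> hamming u v"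
    using far by auto
qed

theorem proposition9:
  fixes m n w r d :: nat
  assumes "0 < m" and "0 < n" and "0 < w" and "w \<le> m"
    and "0 < r" and "r \<le> w" and "d = (n - 1) * w + r"
  shows "A m n w d \<le> B m w r"
proof (rule A_le[OF \<open>w \<le> m\<close>])
  fix C assume C: "C \<subseteq> Jpow m n w" "C \<noteq> {}"
    and dist: "\<forall>x\<in>C. \<forall>y\<in>C. x \<noteq> y \<longrightarrow> 2 * d \<le> mdist x y"
  note column = first_column_code[OF C(1) dist[unfolded \<open>d = _\<close>] \<open>0 < n\<close> \<open>0 < r\<close>]
  have "card C = card ((\<lambda>x. x ! 0) ` C)"
    using column(1) by (simp add: card_image)
  also have "\<dots> \<le> B m w r"
    using column(2,3) C(2) by (intro card_le_B) auto
  finally show "card C \<le> B m w r" .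
qed

end
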